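(* Let $m_1,m_2\ge 0$ and $s_1,s_2>0$. The falsification frontier is $$FF=\big(FF_{1,2}\cup FF_{2,1}\big)\cap[0,\infty)^2,$$ where for $(j,j')\in\{(1,2),(2,1)\}$ $$FF_{j,j'}=\Big\{(\delta_e,\delta_m)\in\mathbb{R}^2:\ \delta_m=\frac{m_j-m_{j'}-\delta_e\,(s_j+s_{j'})}{2}\Big\}.$$
   Context: Let $m_j=\mathbb{E}[\hat\theta^{j}/\alpha^{j}]$ and $s_j=\mathbb{E}[1/\alpha^{j}]$ for two variable inputs $j=1,2$, where $\alpha^j>0$ is the revenue share of input $j$ and $\hat\theta^j\ge0$ its estimated output elasticity; for the purposes of the statement these are arbitrary real numbers with $m_j\ge 0$, $s_j>0$. For $(\delta_e,\delta_m)\in[0,\infty)^2$ (uniform relaxation bounds on elasticity error and on departure from cost minimization) define $\mathrm{LB}_j(\delta_e,\delta_m)=m_j-\delta_e s_j-\delta_m$, $\mathrm{UB}_j(\delta_e,\delta_m)=m_j+\delta_e s_j+\delta_m$, $L=\max\{0,\mathrm{LB}_1,\mathrm{LB}_2\}$, $U=\min\{\mathrm{UB}_1,\mathrm{UB}_2\}$, and the identified set $I(\delta_e,\delta_m)=\{x\in\mathbb{R}: L\le x\le U\}$ (possibly empty). The falsification frontier $FF$ is the set of $(\delta_e,\delta_m)\in[0,\infty)^2$ such that $I(\delta_e,\delta_m)\neq\emptyset$ and $I(\delta_e',\delta_m')=\emptyset$ for every $(\delta_e',\delta_m')\in[0,\infty)^2$ with $\delta_e'\le\delta_e$, $\delta_m'\le\delta_m$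 and $(\delta_e',\delta_m')\neq(\delta_e,\delta_m)$. *)

theory Defs
  imports Complex_Main
begin

definition LB :: "real \<Rightarrow> real \<Rightarrow> real \<Rightarrow> real \<Rightarrow> real" where
  "LB m s de dm = m - de * s - dm"

definition UB :: "real \<Rightarrow> real \<Rightarrow> real \<Rightarrow> real \<Rightarrow> real" where
  "UB m s de dm = m + de * s + dm"

definition Lbound :: "real \<Rightarrow> real \<Rightarrow> real \<Rightarrow> real \<Rightarrow> real \<Rightarrow> real \<Rightarrow> real" where
  "Lbound m1 m2 s1 s2 de dm = max 0 (max (LB m1 s1 de dm) (LB m2 s2 de dm))"

definition Ubound :: "real \<Rightarrow> real \<Rightarrow> real \<Rightarrow> real \<Rightarrow> real \<Rightarrow> real \<Rightarrow> real" where
  "Ubound m1 m2 s1 s2 de dm = min (UB m1 s1 de dm) (UB m2 s2 de dm)"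

definition ident_set :: "real \<Rightarrow> real \<Rightarrow> real \<Rightarrow> real \<Rightarrow> real \<Rightarrow> real \<Rightarrow> real set" where
  "ident_set m1 m2 s1 s2 de dm =
     {x. Lbound m1 m2 s1 s2 de dm \<le> x \<and> x \<le> Ubound m1 m2 s1 s2 de dm}"

definition falsification_frontier :: "real \<Rightarrow> real \<Rightarrow> real \<Rightarrow> real \<Rightarrow> (real \<times> real) set" where
  "falsification_frontier m1 m2 s1 s2 =
     {(de, dm). 0 \<le> de \<and> 0 \<le> dm \<and> ident_set m1 m2 s1 s2 de dm \<noteq> {} \<and>
        (\<forall>de' dm'. 0 \<le> de' \<and> 0 \<le> dm' \<and> de' \<le> de \<and> dm' \<le> dm \<and> (de', dm') \<noteq> (de, dm)
           \<longrightarrow> ident_set m1 m2 s1 s2 de' dm' = {})}"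

definition FF_line :: "real \<Rightarrow> real \<Rightarrow> real \<Rightarrow> real \<Rightarrow> (real \<times> real) set" where
  "FF_line mj mj' sj sj' = {(de, dm). dm = (mj - mj' - de * (sj + sj')) / 2}"

end

theory Submission
  imports Defs
begin

text \<open>The identified set is nonempty exactly when the bounds coming from different inputs are
  compatible, i.e. when \<open>\<bar>m\<^sub>1 - m\<^sub>2\<bar> \<le> \<delta>\<^sub>e (s\<^sub>1 + s\<^sub>2) + 2 \<delta>\<^sub>m\<close>; the remaining comparisons hold
  automatically in the nonnegative quadrant. The frontier is therefore the set of minimal points
  of a half-plane \<open>a x + b y \<ge> c\<close> (\<open>a, b > 0\<close>, \<open>c \<ge> 0\<close>) within the quadrant, which is its
  boundary line: a point strictly inside is not minimal, since scaling it towards the origin by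
  \<open>c / (a x + b y) < 1\<close> keeps it in the half-plane.\<close>

lemma ident_set_nonempty_iff:
  fixes m1 m2 s1 s2 de dm :: real
  assumes "m1 \<ge> 0" "m2 \<ge> 0" "s1 \<ge> 0" "s2 \<ge> 0" "de \<ge> 0" "dm \<ge> 0"
  shows "ident_set m1 m2 s1 s2 de dm \<noteq> {} \<longleftrightarrow> \<bar>m1 - m2\<bar> \<le> (s1 + s2) * de + 2 * dm"
proof -
  have "ident_set m1 m2 s1 s2 de dm \<noteq> {} \<longleftrightarrow> Lbound m1 m2 s1 s2 de dm \<le> Ubound m1 m2 s1 s2 de dm"
    unfolding ident_set_def by (auto intro: order_trans)
  moreover have "de * s1 \<ge> 0" "de * s2 \<ge> 0"
    using assms by simp_all
  ultimately show ?thesis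
    unfolding Lbound_def Ubound_def LB_def UB_def
    using assms by (auto simp: abs_if algebra_simps)
qed

lemma mem_FF_line_iff:
  "(de, dm) \<in> FF_line mj mj' sj sj' \<longleftrightarrow> (sj + sj') * de + 2 * dm = mj - mj'"
  unfolding FF_line_def by (auto simp: algebra_simps)

lemma minimal_in_quadrant_halfplane_iff:
  fixes a b c x y :: real
  assumes "a > 0" "b > 0" "c \<ge> 0" "x \<ge> 0" "y \<ge> 0"
  shows "c \<le> a * x + b * y \<and>
      (\<forall>x' y'. 0 \<le> x' \<and> 0 \<le> y' \<and> x' \<le> x \<and> y' \<le> y \<and> (x', y') \<noteq> (x, y)
         \<longrightarrow> \<not> c \<le> a * x' + b * y')
    \<longleftrightarrow> a * x + b * y = c"
proof
  assume "c \<le> a * x + b * y \<and>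
      (\<forall>x' y'. 0 \<le> x' \<and> 0 \<le> y' \<and> x' \<le> x \<and> y' \<le> y \<and> (x', y') \<noteq> (x, y)
         \<longrightarrow> \<not> c \<le> a * x' + b * y')"
  then have above: "c \<le> a * x + b * y"
    and minimal: "\<And>x' y'. 0 \<le> x' \<Longrightarrow> 0 \<le> y' \<Longrightarrow> x' \<le> x \<Longrightarrow> y' \<le> y \<Longrightarrow> (x', y') \<noteq> (x, y)
         \<Longrightarrow> \<not> c \<le> a * x' + b * y'"
    by simp_all
  show "a * x + b * y = c"
  proof (rule ccontr)
    assume "a * x + b * y \<noteq> c"
    then have strict: "c < a * x + b * y"
      using above by simp
    define t where "t = c / (a * x + b * y)"
    have t: "0 \<le> t" "t < 1"
      using strict assms by (auto simp: t_def)
    have "(t * x, t * y) \<noteq> (x, y)"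
    proof
      assume "(t * x, t * y) = (x, y)"
      then have "x = 0" "y = 0"
        using t by (auto simp: mult_cancel_right1)
      then show False
        using strict assms by simp
    qed
    moreover have "a * (t * x) + b * (t * y) = c"
    proof -
      have "a * (t * x) + b * (t * y) = t * (a * x + b * y)"
        by (simp add: algebra_simps)
      also have "\<dots> = c"
        using strict assms by (simp add: t_def)
      finally show ?thesis .
    qed
    ultimately show False
      using minimal[of "t * x" "t * y"] t assms by (auto simp: mult_left_le_one_le)
  qed
next
  assume line: "a * x + b * y = c"
  have "a * x' + b * y' < c"
    if "0 \<le> x'" "0 \<le> y'" "x' \<le> x" "y' \<le> y" "(x', y') \<noteq> (x, y)" for x' y'
  proof -
    have "a * x' \<le> a * x" "b * y' \<le> b * y"
      using that assms by simp_all
    moreover have "a * x' < a * x \<or> b * y' < b * y"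
      using that assms by auto
    ultimately show ?thesis
      using line by linarith
  qed
  then show "c \<le> a * x + b * y \<and>
      (\<forall>x' y'. 0 \<le> x' \<and> 0 \<le> y' \<and> x' \<le> x \<and> y' \<le> y \<and> (x', y') \<noteq> (x, y)
         \<longrightarrow> \<not> c \<le> a * x' + b * y')"
    using line by force
qed

theorem proposition2:
  fixes m1 m2 s1 s2 :: real
  assumes "m1 \<ge> 0" "m2 \<ge> 0" "s1 > 0" "s2 > 0"
  shows "falsification_frontier m1 m2 s1 s2 =
           (FF_line m1 m2 s1 s2 \<union> FF_line m2 m1 s2 s1) \<inter> ({0..} \<times> {0..})"
proof (rule set_eqI, clarify)
  fix de dm :: real
  have empty_iff: "ident_set m1 m2 s1 s2 x y = {} \<longleftrightarrow> \<not> \<bar>m1 - m2\<bar> \<le> (s1 + s2) * x + 2 * y"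
    if "x \<ge> 0" "y \<ge> 0" for x y
    using ident_set_nonempty_iff[of m1 m2 s1 s2 x y] assms that by auto
  have "(de, dm) \<in> falsification_frontier m1 m2 s1 s2 \<longleftrightarrow>
      0 \<le> de \<and> 0 \<le> dm \<and> \<bar>m1 - m2\<bar> \<le> (s1 + s2) * de + 2 * dm \<and>
      (\<forall>x y. 0 \<le> x \<and> 0 \<le> y \<and> x \<le> de \<and> y \<le> dm \<and> (x, y) \<noteq> (de, dm)
         \<longrightarrow> \<not> \<bar>m1 - m2\<bar> \<le> (s1 + s2) * x + 2 * y)"
    unfolding falsification_frontier_def by (simp add: empty_iff cong: conj_cong imp_cong)
  also have "\<dots> \<longleftrightarrow> 0 \<le> de \<and> 0 \<le> dm \<and> (s1 + s2) * de + 2 * dm = \<bar>m1 - m2\<bar>"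
    using minimal_in_quadrant_halfplane_iff[of "s1 + s2" 2 "\<bar>m1 - m2\<bar>" de dm] assms
    by auto
  also have "\<dots> \<longleftrightarrow> (de, dm) \<in> (FF_line m1 m2 s1 s2 \<union> FF_line m2 m1 s2 s1) \<inter> ({0..} \<times> {0..})"
  proof -
    have "0 \<le> de \<Longrightarrow> 0 \<le> (s1 + s2) * de"
      using assms by simp
    then show ?thesis
      by (auto simp: mem_FF_line_iff add.commute[of s2] abs_if)
  qed
  finally show "(de, dm) \<in> falsification_frontier m1 m2 s1 s2 \<longleftrightarrow> \<dots>" .
qed

end
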